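(* Let $k$ be a field, $E$ a $k$-vector space of dimension $n$, and $f\in\operatorname{End}_k(E)$ an endomorphism with annihilating (minimal) polynomial $x^n$. Let $e\in E$ be a vector with $f^{n-1}(e)\neq 0$. Then the generalized inverses $g\in\operatorname{End}_k(E)$ of $f$ are exactly the linear maps determined by $$g(f^i(e))=\begin{cases} f^{i-1}(e)+\lambda_i f^{n-1}(e) & \text{if } 1\le i\le n-1,\\ \sum_{h=0}^{n-1}\alpha_h f^h(e) & \text{if } i=0,\end{cases}$$ where $\lambda_1,\dots,\lambda_{n-1},\alpha_0,\dots,\alpha_{n-1}\in k$ are arbitrary scalars.
   Context: A generalized inverse of an endomorphism $f$ of $E$ is an endomorphism $g$ of $E$ with $f\circ g\circ f=f$. *)

theory Defs
  imports Complex_Main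
begin

definition generalized_inverse ::
  "('k::field \<Rightarrow> 'v::ab_group_add \<Rightarrow> 'v) \<Rightarrow> ('v \<Rightarrow> 'v) \<Rightarrow> ('v \<Rightarrow> 'v) \<Rightarrow> bool" where
  "generalized_inverse scale f g \<longleftrightarrow> Vector_Spaces.linear scale scale g \<and> f \<circ> g \<circ> f = f"

end

(* Applying f^(n-1-j) to a vanishing combination of e, f e, ..., f^(n-1) e isolates the
   lowest coefficient, so these n vectors are independent and hence a basis; on it f is the
   shift, whose kernel is the line through f^(n-1) e. As the basis spans, f g f = f only has
   to hold on basis vectors, where it says g (f^i e) = f^(i-1) e modulo ker f for i >= 1 and
   says nothing about g e; and a linear map can take arbitrary prescribed values on a basis. *)
theory Submission
  imports Defs
begin

lemma linear_funpow:
  assumes "Vector_Spaces.linear s s f"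
  shows "Vector_Spaces.linear s s (f ^^ m)"
proof (induction m)
  case 0
  have "vector_space s"
    using assms by (simp add: Vector_Spaces.linear_iff)
  then show ?case
    by (simp add: id_def[symmetric] vector_space.linear_id)
next
  case (Suc m)
  then show ?case
    unfolding funpow.simps(2) using assms by (rule Vector_Spaces.linear_compose)
qed

lemma funpow_apply_funpow: "(f ^^ m) ((f ^^ k) x) = (f ^^ (m + k)) x"
  by (simp add: funpow_add)

context vector_space
begin

lemma in_span_image_sum:
  assumes "finite I" "inj_on v I" "x \<in> span (v ` I)"
  obtains c where "x = (\<Sum>i\<in>I. c i *s v i)"
proof -
  obtain u where "x = (\<Sum>y\<in>v ` I. u y *s y)"
    using assms span_finite[of "v ` I"] by auto
  then have "x = (\<Sum>i\<in>I. u (v i) *s v i)"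
    using sum.reindex[OF assms(2)] by simp
  then show thesis
    by (rule that)
qed

lemma span_eq_UNIV_if_card_eq_dim:
  assumes "\<exists>B. finite B \<and> span B = UNIV" "independent S" "finite S" "card S = dim UNIV"
  shows "span S = UNIV"
proof -
  obtain T where T: "finite T" "span T = UNIV"
    using assms(1) by blast
  obtain B where B: "independent B" "UNIV \<subseteq> span B" "card B = dim UNIV"
    using basis_exists[of UNIV] by blast
  have "finite B"
    using independent_span_bound[OF T(1) B(1)] T(2) by simp
  then interpret finite_dimensional_vector_space scale B
    by unfold_locales (use B in auto)
  show ?thesis
    using card_eq_dim[of S UNIV] assms(2-4) by auto
qed

lemma generalized_inverse_iff_on_spanning:
  assumes "span B = UNIV" "Vector_Spaces.linear scale scale f"
  shows "generalized_inverse scale f g \<longleftrightarrow>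
    Vector_Spaces.linear scale scale g \<and> (\<forall>b\<in>B. f (g (f b)) = f b)"
proof
  assume "generalized_inverse scale f g"
  then show "Vector_Spaces.linear scale scale g \<and> (\<forall>b\<in>B. f (g (f b)) = f b)"
    unfolding generalized_inverse_def by (metis comp_apply)
next
  assume g: "Vector_Spaces.linear scale scale g \<and> (\<forall>b\<in>B. f (g (f b)) = f b)"
  interpret vector_space_pair scale scale ..
  have "Vector_Spaces.linear scale scale (f \<circ> g \<circ> f)"
    using g assms(2) by (metis Vector_Spaces.linear_compose)
  then have "(f \<circ> g \<circ> f) x = f x" for x
    by (rule linear_eq_on[OF _ assms(2)]) (use assms(1) g in auto)
  then show "generalized_inverse scale f g"
    unfolding generalized_inverse_def using g by auto
qed

end

context vector_space_pair
begin

lemma ex1_linear_on_basis: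
  assumes "vs1.independent (v ` I)" "vs1.span (v ` I) = UNIV" "inj_on v I"
  shows "\<exists>!g. Vector_Spaces.linear s1 s2 g \<and> (\<forall>i\<in>I. g (v i) = u i)"
proof -
  let ?g = "construct (v ` I) (\<lambda>x. u (inv_into I v x))"
  have "Vector_Spaces.linear s1 s2 ?g \<and> (\<forall>i\<in>I. ?g (v i) = u i)"
    using assms linear_construct construct_basis inv_into_f_f by auto
  moreover have "g = ?g" if g: "Vector_Spaces.linear s1 s2 g \<and> (\<forall>i\<in>I. g (v i) = u i)" for g
  proof
    fix x
    show "g x = ?g x"
      by (rule linear_eq_on[of g]) (use assms g linear_construct construct_basis inv_into_f_f in auto)
  qed
  ultimately show ?thesis
    by blast
qed

end

locale nilpotent_cyclic = vector_space scale
  for scale :: "'k::field \<Rightarrow> 'v::ab_group_add \<Rightarrow> 'v" (infixr \<open>*s\<close> 75) +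
  fixes f :: "'v \<Rightarrow> 'v" and e :: 'v and n :: nat
  assumes linear_f: "Vector_Spaces.linear scale scale f"
    and nilpotent: "f ^^ n = (\<lambda>_. 0)"
    and cyclic: "(f ^^ (n - 1)) e \<noteq> 0"
begin

sublocale vp: vector_space_pair scale scale ..

abbreviation jordan_chain :: "'v set"
  where "jordan_chain \<equiv> (\<lambda>i. (f ^^ i) e) ` {..<n}"

lemma linear_funpow_f: "Vector_Spaces.linear scale scale (f ^^ m)"
  using linear_f by (rule linear_funpow)

lemma funpow_ge_eq_0: "n \<le> m \<Longrightarrow> (f ^^ m) x = 0"
  using nilpotent vp.linear_0[OF linear_funpow_f, of "m - n"]
  by (metis comp_apply funpow_add le_add_diff_inverse2)

lemma n_pos: "0 < n"
  using cyclic nilpotent by (cases n) (simp_all add: fun_eq_iff)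

lemma f_last_eq_0: "f ((f ^^ (n - 1)) e) = 0"
  using funpow_ge_eq_0[of n e] n_pos by (cases n) auto

lemma funpow_sum_jordan_chain:
  assumes "j < n" "\<forall>i<j. c i = 0"
  shows "(f ^^ (n - 1 - j)) (\<Sum>i<n. c i *s (f ^^ i) e) = c j *s (f ^^ (n - 1)) e"
proof -
  have "(f ^^ (n - 1 - j)) (\<Sum>i<n. c i *s (f ^^ i) e) = (\<Sum>i<n. c i *s (f ^^ (n - 1 - j + i)) e)"
    by (simp add: vp.linear_sum[OF linear_funpow_f] vp.linear_scale[OF linear_funpow_f] funpow_add)
  also have "\<dots> = (\<Sum>i<n. if i = j then c j *s (f ^^ (n - 1)) e else 0)"
  proof (rule sum.cong)
    fix i
    assume "i \<in> {..<n}"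
    consider "i < j" | "i = j" | "j < i"
      by linarith
    then show "c i *s (f ^^ (n - 1 - j + i)) e = (if i = j then c j *s (f ^^ (n - 1)) e else 0)"
      by cases (use assms funpow_ge_eq_0[of "n - 1 - j + i" e] in auto)
  qed simp
  also have "\<dots> = c j *s (f ^^ (n - 1)) e"
    using assms by simp
  finally show ?thesis .
qed

lemma jordan_chain_coeff_eq_0:
  assumes "k \<le> n" "\<forall>j<k. (f ^^ (n - 1 - j)) (\<Sum>i<n. c i *s (f ^^ i) e) = 0" "j < k"
  shows "c j = 0"
  using \<open>j < k\<close>
proof (induction j rule: less_induct)
  case (less j)
  then have "c j *s (f ^^ (n - 1)) e = 0"
    using assms funpow_sum_jordan_chain[of j c] by auto
  then show ?case
    using cyclic by simp
qed

lemma inj_on_jordan_chain: "inj_on (\<lambda>i. (f ^^ i) e) {..<n}"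
proof -
  have "(f ^^ i) e \<noteq> (f ^^ j) e" if "i < j" "j < n" for i j
  proof
    assume eq: "(f ^^ i) e = (f ^^ j) e"
    have "(f ^^ (n - 1)) e = (f ^^ (n - 1 - i)) ((f ^^ i) e)"
      using that by (simp add: funpow_apply_funpow)
    also have "\<dots> = (f ^^ (n - 1 - i + j)) e"
      using eq by (simp add: funpow_apply_funpow)
    also have "\<dots> = 0"
      using that by (intro funpow_ge_eq_0) linarith
    finally show False
      using cyclic by contradiction
  qed
  then show ?thesis
    unfolding inj_on_def by (metis lessThan_iff linorder_neqE_nat)
qed

lemma independent_jordan_chain: "independent jordan_chain"
proof (rule independent_if_scalars_zero)
  fix u x
  assume sum: "(\<Sum>x\<in>jordan_chain. u x *s x) = 0" and "x \<in> jordan_chain"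
  then obtain j where j: "j < n" "x = (f ^^ j) e"
    by blast
  have "(\<Sum>i<n. u ((f ^^ i) e) *s (f ^^ i) e) = 0"
    using sum by (simp add: sum.reindex[OF inj_on_jordan_chain])
  then show "u x = 0"
    using jordan_chain_coeff_eq_0[of n "\<lambda>i. u ((f ^^ i) e)" j] j vp.linear_0[OF linear_funpow_f]
    by auto
qed simp

end

locale nilpotent_cyclic_basis = nilpotent_cyclic +
  assumes finite_dimensional: "\<exists>B. finite B \<and> span B = UNIV"
    and dim_eq: "dim UNIV = n"
begin

lemma span_jordan_chain: "span jordan_chain = UNIV"
  using finite_dimensional independent_jordan_chain card_image[OF inj_on_jordan_chain] dim_eq
  by (intro span_eq_UNIV_if_card_eq_dim) auto

lemma jordan_chain_expansion:
  obtains c where "v = (\<Sum>i<n. c i *s (f ^^ i) e)"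
  using in_span_image_sum[of "{..<n}" "\<lambda>i. (f ^^ i) e" v] span_jordan_chain inj_on_jordan_chain
  by auto

lemma kernel_eq_line: "f w = 0 \<longleftrightarrow> (\<exists>l. w = l *s (f ^^ (n - 1)) e)"
proof
  assume fw: "f w = 0"
  obtain c where c: "w = (\<Sum>i<n. c i *s (f ^^ i) e)"
    by (rule jordan_chain_expansion)
  have "(f ^^ (n - 1 - j)) w = 0" if "j < n - 1" for j
  proof -
    have "n - 1 - j = Suc (n - 2 - j)"
      using that by linarith
    then have "(f ^^ (n - 1 - j)) w = (f ^^ (n - 2 - j)) (f w)"
      by (simp only: funpow_Suc_right comp_apply)
    then show ?thesis
      using fw vp.linear_0[OF linear_funpow_f] by simp
  qed
  then have "c j = 0" if "j < n - 1" for j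
    using jordan_chain_coeff_eq_0[of "n - 1" c j] c that by auto
  then have "w = c (n - 1) *s (f ^^ (n - 1)) e"
    using c n_pos by (cases n) auto
  then show "\<exists>l. w = l *s (f ^^ (n - 1)) e" ..
next
  assume "\<exists>l. w = l *s (f ^^ (n - 1)) e"
  then show "f w = 0"
    using f_last_eq_0 vp.linear_scale[OF linear_f] by auto
qed

lemma f_g_fixes_iff:
  assumes "0 < i"
  shows "f (g ((f ^^ i) e)) = (f ^^ i) e \<longleftrightarrow>
    (\<exists>l. g ((f ^^ i) e) = (f ^^ (i - 1)) e + l *s (f ^^ (n - 1)) e)"
proof -
  have "(f ^^ i) e = f ((f ^^ (i - 1)) e)"
    using assms(1) by (cases i) auto
  then have "f (g ((f ^^ i) e)) = (f ^^ i) e \<longleftrightarrow> f (g ((f ^^ i) e) - (f ^^ (i - 1)) e) = 0"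
    by (simp add: vp.linear_diff[OF linear_f])
  also have "\<dots> \<longleftrightarrow> (\<exists>l. g ((f ^^ i) e) - (f ^^ (i - 1)) e = l *s (f ^^ (n - 1)) e)"
    by (rule kernel_eq_line)
  also have "\<dots> \<longleftrightarrow> (\<exists>l. g ((f ^^ i) e) = (f ^^ (i - 1)) e + l *s (f ^^ (n - 1)) e)"
    by (simp add: diff_eq_eq add.commute)
  finally show ?thesis .
qed

lemma generalized_inverse_iff_jordan_chain:
  "generalized_inverse scale f g \<longleftrightarrow> Vector_Spaces.linear scale scale g \<and>
    (\<forall>i\<in>{1..n-1}. \<exists>l. g ((f ^^ i) e) = (f ^^ (i - 1)) e + l *s (f ^^ (n - 1)) e)"
proof -
  let ?fixes = "\<lambda>i. f (g ((f ^^ i) e)) = (f ^^ i) e"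
  have "(\<forall>b\<in>jordan_chain. f (g (f b)) = f b) \<longleftrightarrow> (\<forall>i\<in>{1..n-1}. ?fixes i)"
    if "Vector_Spaces.linear scale scale g"
  proof -
    have "?fixes n"
      using nilpotent vp.linear_0[OF that] vp.linear_0[OF linear_f] by simp
    then have "(\<forall>j\<in>{..<n}. ?fixes (Suc j)) \<longleftrightarrow> (\<forall>i\<in>{1..n-1}. ?fixes i)"
    proof (intro iffI ballI)
      fix i
      assume "\<forall>j\<in>{..<n}. ?fixes (Suc j)" and "i \<in> {1..n-1}"
      moreover have "Suc (i - 1) = i" "i - 1 \<in> {..<n}"
        using \<open>i \<in> {1..n-1}\<close> by auto
      ultimately show "?fixes i"
        by metis
    next
      fix j
      assume "\<forall>i\<in>{1..n-1}. ?fixes i" "j \<in> {..<n}"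
      then show "?fixes (Suc j)"
        using \<open>?fixes n\<close> by (cases "Suc j = n") (auto simp del: funpow.simps)
    qed
    then show ?thesis
      by simp
  qed
  then show ?thesis
    using generalized_inverse_iff_on_spanning[OF span_jordan_chain linear_f] f_g_fixes_iff
    by auto
qed

lemma ex1_linear_on_jordan_chain:
  "\<exists>!g. Vector_Spaces.linear scale scale g \<and> (\<forall>i\<in>{1..n-1}. g ((f ^^ i) e) = u i) \<and> g e = w"
proof -
  have "(\<forall>i\<in>{1..n-1}. g ((f ^^ i) e) = u i) \<and> g e = w \<longleftrightarrow>
      (\<forall>i\<in>{..<n}. g ((f ^^ i) e) = (u(0 := w)) i)" for g
    using n_pos by (auto simp: Ball_def)
  then show ?thesis
    using vp.ex1_linear_on_basis[OF independent_jordan_chain span_jordan_chain inj_on_jordan_chain]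
    by simp
qed

end

theorem corollary3p8:
  fixes scale :: "'k::field \<Rightarrow> 'v::ab_group_add \<Rightarrow> 'v"
    and f :: "'v \<Rightarrow> 'v" and e :: 'v and n :: nat
  assumes vs: "vector_space scale"
    and fin: "\<exists>B. finite B \<and> module.span scale B = UNIV"
    and dim: "vector_space.dim scale UNIV = n"
    and lin: "Vector_Spaces.linear scale scale f"
    and annih: "f ^^ n = (\<lambda>_. 0)"
    and minim: "\<forall>m<n. f ^^ m \<noteq> (\<lambda>_. 0)"
    and e: "(f ^^ (n - 1)) e \<noteq> 0"
  shows "(\<forall>g. generalized_inverse scale f g \<longleftrightarrow>
            Vector_Spaces.linear scale scale g \<and>
            (\<exists>(lam::nat \<Rightarrow> 'k) (\<alpha>::nat \<Rightarrow> 'k).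
               (\<forall>i\<in>{1..n-1}. g ((f ^^ i) e) = (f ^^ (i - 1)) e + scale (lam i) ((f ^^ (n - 1)) e)) \<and>
               g e = (\<Sum>h<n. scale (\<alpha> h) ((f ^^ h) e))))
       \<and> (\<forall>(lam::nat \<Rightarrow> 'k) (\<alpha>::nat \<Rightarrow> 'k). \<exists>!g.
            Vector_Spaces.linear scale scale g \<and>
            (\<forall>i\<in>{1..n-1}. g ((f ^^ i) e) = (f ^^ (i - 1)) e + scale (lam i) ((f ^^ (n - 1)) e)) \<and>
            g e = (\<Sum>h<n. scale (\<alpha> h) ((f ^^ h) e)))"
proof -
  \<comment> \<open>minim is implied by e and not needed\<close>
  interpret nilpotent_cyclic_basis scale f e n
    using vs fin dim lin annih e
    by (simp add: nilpotent_cyclic_basis_def nilpotent_cyclic_basis_axioms_def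
        nilpotent_cyclic_def nilpotent_cyclic_axioms_def)
  have "generalized_inverse scale f g \<longleftrightarrow>
            Vector_Spaces.linear scale scale g \<and>
            (\<exists>(lam::nat \<Rightarrow> 'k) (\<alpha>::nat \<Rightarrow> 'k).
               (\<forall>i\<in>{1..n-1}. g ((f ^^ i) e) = (f ^^ (i - 1)) e + scale (lam i) ((f ^^ (n - 1)) e)) \<and>
               g e = (\<Sum>h<n. scale (\<alpha> h) ((f ^^ h) e)))" for g
  proof -
    obtain \<alpha> where "g e = (\<Sum>h<n. scale (\<alpha> h) ((f ^^ h) e))"
      by (rule jordan_chain_expansion)
    then show ?thesis
      unfolding generalized_inverse_iff_jordan_chain bchoice_iff by blast
  qed
  moreover have "\<exists>!g. Vector_Spaces.linear scale scale g \<and>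
            (\<forall>i\<in>{1..n-1}. g ((f ^^ i) e) = (f ^^ (i - 1)) e + scale (lam i) ((f ^^ (n - 1)) e)) \<and>
            g e = (\<Sum>h<n. scale (\<alpha> h) ((f ^^ h) e))" for lam \<alpha>
    by (rule ex1_linear_on_jordan_chain)
  ultimately show ?thesis
    by blast
qed

end
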